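(* Let $\mathcal A\subset\mathbb R^n$ be compact with diameter $D_{\mathcal A}<\infty$, let $\mathcal X=\mathrm{conv}(\mathcal A)$, let $f$ have $L$-Lipschitz gradient, and let $\eta\in(1,2)$. Run the AC-FW algorithm with the away-step Frank-Wolfe subroutine and a damping sequence satisfying Condition (D), with $L_0>0$. Then the subroutine satisfies parts (i) and (ii) of Condition (S); more precisely, for every $t\ge0$, $$|\mathcal G\cap\mathcal I_\eta\cap[t]|\ge\frac{t+1}{2}-\left\lfloor\log_\eta\!\left(\frac{L}{rL_0}\right)\right\rfloor.$$ If additionally $f$ is convex, then part (iii) of Condition (S) holds with $R=1$.
   Context: $D_{\mathcal A}:=\sup_{x,y\in\mathcal A}\|x-y\|_2$; $f:\mathbb R^n\to\mathbb R$ is differentiable with $\|\nabla f(x)-\nabla f(y)\|_2\le L\|x-y\|_2$. $x^\star$ is an optimal solution of $\min_{x\in\mathcal X}f(x)$. For $x\ne y$, $\ell(x,y):=2|f(y)-f(x)-\nabla f(x)^\top(y-x)|/\|y-x\|_2^2$, $\ell(x,x):=0$. AC-FW algorithm: given $\{r_t\}_{t\ge0}$ and a subroutine, pick $x_{-1}\in\mathcal A$, $x_0\in\arg\min_{v\in\mathcal A}\nabla f(x_{-1})^\top v$, $L_0:=\ell(x_{-1},x_0)$. For $t=0,1,\dots$: $v_t\in\arg\min_{v\in\mathcal A}\nabla f(x_t)^\top v$; the subroutine returns $(d_t,\gamma_t^{\max})$; $\gamma_t:=\min\{\nabla f(x_t)^\top d_t/(L_t\|d_t\|_2^2),\gamma_t^{\max}\}$;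 $\bar x_{t+1}:=x_t-\gamma_td_t$; $L_{t+1}:=\max\{\ell(x_t,\bar x_{t+1}),r_tL_t\}$; $x_{t+1}:=\bar x_{t+1}$ if $f(\bar x_{t+1})<f(x_t)$, else $x_{t+1}:=x_t$. Away-step Frank-Wolfe subroutine: it maintains weights $\alpha_{s,t}\ge0$ ($s\in\mathcal A$), active set $\mathcal S_t:=\{s:\alpha_{s,t}>0\}$, $x_t=\sum_s\alpha_{s,t}s$, initially $\mathcal S_0=\{x_0\}$, $\alpha_{x_0,0}=1$. At iteration $t$: $s_t\in\arg\max_{s\in\mathcal S_t}\nabla f(x_t)^\top s$. If $\nabla f(x_t)^\top(x_t-v_t)\ge\nabla f(x_t)^\top(s_t-x_t)$ (FW step): $d_t:=x_t-v_t$, $\gamma_t^{\max}:=1$; otherwise (away step): $d_t:=s_t-x_t$, $\gamma_t^{\max}:=\alpha_{s_t,t}/(1-\alpha_{s_t,t})$. If $x_{t+1}=x_t$, weights are unchanged; if an FW step is accepted, $\alpha_{s,t+1}:=(1-\gamma_t)\alpha_{s,t}+\gamma_t\mathbf 1\{s=v_t\}$; if an away step is accepted, $\alpha_{s,t+1}:=(1+\gamma_t)\alpha_{s,t}-\gamma_t\mathbf 1\{s=s_t\}$. Then $\mathcal S_{t+1}:=\{s:\alpha_{s,t+1}>0\}$. $[t]:=\{0,\dots,t\}$; $\mathcal I_\eta:=\{t\ge0:L_{t+1}\le\eta L_t\}$; $\mathcal G:=\{t\ge0:\gamma_t^{\max}\ge1\text{ or }\gamma_t<\gamma_t^{\max}\}$.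 Condition (D): $r_t\in(0,1]$ for all $t$ and $r:=\prod_{t\ge0}r_t\in(0,1]$. Condition (S): for all $t\ge0$: (i) $\|d_t\|_2\le D_{\mathcal A}$ and $x_t-\gamma d_t\in\mathcal X$ for all finite $\gamma\in[0,\gamma_t^{\max}]$; (ii) $\mathcal G$ is infinite; (iii) if $f$ is convex, there is $R\ge1$ independent of $t$ with $\nabla f(x_t)^\top d_t\ge(f(x_t)-f(x^\star))/R$. *)

theory Defs
  imports "HOL-Analysis.Analysis"
begin

definition ell :: "('a::real_inner \<Rightarrow> real) \<Rightarrow> ('a \<Rightarrow> 'a) \<Rightarrow> 'a \<Rightarrow> 'a \<Rightarrow> real" where
  "ell f g x y = (if x = y then 0
     else 2 * \<bar>f y - f x - g x \<bullet> (y - x)\<bar> / (norm (y - x))\<^sup>2)"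

text \<open>Sequences: x (iterates), Ls (estimates L_t), v (FW vertices), s (away vertices),
  d (directions), gmax (maximal step sizes), gam (step sizes), alpha (weights).
  All argmin/argmax choices are arbitrary (any tie-breaking).\<close>
definition acfw_afw_run ::
  "'a::real_inner set \<Rightarrow> ('a \<Rightarrow> real) \<Rightarrow> ('a \<Rightarrow> 'a) \<Rightarrow> (nat \<Rightarrow> real) \<Rightarrow> 'a \<Rightarrow>
   (nat \<Rightarrow> 'a) \<Rightarrow> (nat \<Rightarrow> real) \<Rightarrow> (nat \<Rightarrow> 'a) \<Rightarrow> (nat \<Rightarrow> 'a) \<Rightarrow> (nat \<Rightarrow> 'a) \<Rightarrow>
   (nat \<Rightarrow> real) \<Rightarrow> (nat \<Rightarrow> real) \<Rightarrow> (nat \<Rightarrow> 'a \<Rightarrow> real) \<Rightarrow> bool" where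
  "acfw_afw_run A f g r xm1 x Ls v s d gmax gam alpha \<longleftrightarrow>
     xm1 \<in> A \<and> x 0 \<in> A \<and> (\<forall>u\<in>A. g xm1 \<bullet> x 0 \<le> g xm1 \<bullet> u) \<and>
     Ls 0 = ell f g xm1 (x 0) \<and>
     alpha 0 = (\<lambda>a. if a = x 0 then 1 else 0) \<and>
     (\<forall>t. v t \<in> A \<and> (\<forall>u\<in>A. g (x t) \<bullet> v t \<le> g (x t) \<bullet> u) \<and>
        0 < alpha t (s t) \<and> (\<forall>a. 0 < alpha t a \<longrightarrow> g (x t) \<bullet> a \<le> g (x t) \<bullet> s t) \<and>
        (if g (x t) \<bullet> (x t - v t) \<ge> g (x t) \<bullet> (s t - x t)
         then d t = x t - v t \<and> gmax t = 1
         else d t = s t - x t \<and> gmax t = alpha t (s t) / (1 - alpha t (s t))) \<and>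
        gam t = min (g (x t) \<bullet> d t / (Ls t * (norm (d t))\<^sup>2)) (gmax t) \<and>
        Ls (Suc t) = max (ell f g (x t) (x t - gam t *\<^sub>R d t)) (r t * Ls t) \<and>
        (if f (x t - gam t *\<^sub>R d t) < f (x t)
         then x (Suc t) = x t - gam t *\<^sub>R d t \<and>
              alpha (Suc t) =
                (if g (x t) \<bullet> (x t - v t) \<ge> g (x t) \<bullet> (s t - x t)
                 then (\<lambda>a. (1 - gam t) * alpha t a + gam t * (if a = v t then 1 else 0))
                 else (\<lambda>a. (1 + gam t) * alpha t a - gam t * (if a = s t then 1 else 0)))
         else x (Suc t) = x t \<and> alpha (Suc t) = alpha t))"

end

theory Submission
  imports Defs
begin

text \<open>
  A step outside G is an away step whose step size is clipped at its maximal value, which is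
  below 1. If such a step is rejected, then f does not decrease at a point within the short-step
  bound, and this forces L(t+1) \<ge> 2 L(t) > \<eta> L(t). So a step in \<open>I\<^sub>\<eta>\<close> but outside G is an accepted
  drop step and removes an atom from the active set; as every step adds at most one atom and the
  active set is never empty, at most half of the first t + 1 steps are of this kind. Steps
  outside \<open>I\<^sub>\<eta>\<close> are few, since each multiplies the estimate by more than \<eta>, the damping shrinks
  it by at most the factor r overall, and the Lipschitz bound keeps it below L.
  For convex f, the primal gap is at most the Frank-Wolfe gap, and both kinds of direction have
  an inner product with the gradient at least that gap.
\<close>

lemma line_has_real_derivative:
  fixes f :: "'a::real_inner \<Rightarrow> real"
  assumes grad: "\<And>y. (f has_derivative (\<lambda>h. g y \<bullet> h)) (at y)"
  shows "((\<lambda>t. f (x + t *\<^sub>R h)) has_real_derivative g (x + t *\<^sub>R h) \<bullet> h) (at t)"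
proof -
  have "((\<lambda>t. x + t *\<^sub>R h) has_derivative (\<lambda>t. t *\<^sub>R h)) (at t)"
    by (auto intro!: derivative_eq_intros)
  from has_derivative_compose[OF this grad]
  show ?thesis
    by (simp add: has_field_derivative_def mult_commute_abs)
qed

lemma abs_diff_le_of_derivative_bound:
  fixes \<phi> \<phi>' :: "real \<Rightarrow> real"
  assumes deriv: "\<And>t. 0 \<le> t \<Longrightarrow> t \<le> 1 \<Longrightarrow> (\<phi> has_real_derivative \<phi>' t) (at t)"
    and bound: "\<And>t. 0 \<le> t \<Longrightarrow> t \<le> 1 \<Longrightarrow> \<bar>\<phi>' t\<bar> \<le> K * t"
  shows "\<bar>\<phi> 1 - \<phi> 0\<bar> \<le> K / 2"
proof -
  have "(\<lambda>t. \<phi> t - K / 2 * t\<^sup>2) 1 \<le> (\<lambda>t. \<phi> t - K / 2 * t\<^sup>2) 0"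
  proof (rule DERIV_nonpos_imp_nonincreasing[of 0 1])
    fix t :: real assume "0 \<le> t" "t \<le> 1"
    then show "\<exists>y. ((\<lambda>t. \<phi> t - K / 2 * t\<^sup>2) has_real_derivative y) (at t) \<and> y \<le> 0"
      using bound[of t] deriv[of t] by (intro exI[of _ "\<phi>' t - K * t"] conjI derivative_eq_intros) auto
  qed simp
  moreover have "(\<lambda>t. - \<phi> t - K / 2 * t\<^sup>2) 1 \<le> (\<lambda>t. - \<phi> t - K / 2 * t\<^sup>2) 0"
  proof (rule DERIV_nonpos_imp_nonincreasing[of 0 1])
    fix t :: real assume "0 \<le> t" "t \<le> 1"
    then show "\<exists>y. ((\<lambda>t. - \<phi> t - K / 2 * t\<^sup>2) has_real_derivative y) (at t) \<and> y \<le> 0"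
      using bound[of t] deriv[of t] by (intro exI[of _ "- \<phi>' t - K * t"] conjI derivative_eq_intros) auto
  qed simp
  ultimately show ?thesis by (simp add: abs_if)
qed

lemma lipschitz_gradient_quadratic_bound:
  fixes f :: "'a::real_inner \<Rightarrow> real"
  assumes grad: "\<And>y. (f has_derivative (\<lambda>h. g y \<bullet> h)) (at y)"
    and lip: "\<And>y z. norm (g y - g z) \<le> L * norm (y - z)"
  shows "\<bar>f y - f x - g x \<bullet> (y - x)\<bar> \<le> L / 2 * (norm (y - x))\<^sup>2"
proof -
  define h where "h = y - x"
  have "\<bar>(\<lambda>t. f (x + t *\<^sub>R h) - t * (g x \<bullet> h)) 1 - (\<lambda>t. f (x + t *\<^sub>R h) - t * (g x \<bullet> h)) 0\<bar>
      \<le> L * (norm h)\<^sup>2 / 2"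
  proof (rule abs_diff_le_of_derivative_bound)
    fix t :: real
    show "((\<lambda>t. f (x + t *\<^sub>R h) - t * (g x \<bullet> h)) has_real_derivative
        (g (x + t *\<^sub>R h) - g x) \<bullet> h) (at t)"
      by (rule derivative_eq_intros line_has_real_derivative[OF grad] | simp add: inner_diff_left)+
    assume "0 \<le> t"
    have "\<bar>(g (x + t *\<^sub>R h) - g x) \<bullet> h\<bar> \<le> norm (g (x + t *\<^sub>R h) - g x) * norm h"
      by (rule Cauchy_Schwarz_ineq2)
    also have "\<dots> \<le> L * norm (t *\<^sub>R h) * norm h"
      using lip[of "x + t *\<^sub>R h" x] by (simp add: mult_right_mono)
    finally show "\<bar>(g (x + t *\<^sub>R h) - g x) \<bullet> h\<bar> \<le> L * (norm h)\<^sup>2 * t"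
      using \<open>0 \<le> t\<close> by (simp add: power2_eq_square mult_ac)
  qed
  then show ?thesis by (simp add: h_def algebra_simps)
qed

lemma ell_le_lipschitz_constant:
  fixes f :: "'a::real_inner \<Rightarrow> real"
  assumes grad: "\<And>y. (f has_derivative (\<lambda>h. g y \<bullet> h)) (at y)"
    and lip: "\<And>y z. norm (g y - g z) \<le> L * norm (y - z)"
    and "0 \<le> L"
  shows "ell f g x y \<le> L"
proof (cases "x = y")
  case False
  then have "0 < (norm (y - x))\<^sup>2" by simp
  with lipschitz_gradient_quadratic_bound[OF grad lip, of y x] show ?thesis
    by (simp add: ell_def divide_le_eq)
qed (simp add: ell_def \<open>0 \<le> L\<close>)

lemma convex_on_gradient_inequality:
  fixes f :: "'a::real_inner \<Rightarrow> real"
  assumes grad: "\<And>y. (f has_derivative (\<lambda>h. g y \<bullet> h)) (at y)"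
    and cvx: "convex_on UNIV f"
  shows "g x \<bullet> (y - x) \<le> f y - f x"
proof -
  define h where "h = y - x"
  have "convex_on UNIV (\<lambda>t. f (x + t *\<^sub>R h))"
  proof (rule convex_onI)
    fix u a b :: real assume "0 < u" "u < 1"
    have "x + ((1 - u) *\<^sub>R a + u *\<^sub>R b) *\<^sub>R h = (1 - u) *\<^sub>R (x + a *\<^sub>R h) + u *\<^sub>R (x + b *\<^sub>R h)"
      by (simp add: algebra_simps)
    with convex_onD[OF cvx, of u "x + a *\<^sub>R h" "x + b *\<^sub>R h"] \<open>0 < u\<close> \<open>u < 1\<close>
    show "f (x + ((1 - u) *\<^sub>R a + u *\<^sub>R b) *\<^sub>R h) \<le> (1 - u) * f (x + a *\<^sub>R h) + u * f (x + b *\<^sub>R h)"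
      by simp
  qed simp
  from convex_on_imp_above_tangent[OF this, of 0 1] line_has_real_derivative[OF grad, of x h 0]
  show ?thesis
    by (simp add: h_def has_field_derivative_at_within)
qed

lemma ell_ge_twice_of_no_decrease:
  fixes f :: "'a::real_inner \<Rightarrow> real"
  assumes L: "0 < L" and descent: "0 < g p \<bullet> d" and \<gamma>_pos: "0 < \<gamma>"
    and \<gamma>_le: "\<gamma> \<le> g p \<bullet> d / (L * (norm d)\<^sup>2)"
    and no_decrease: "f p \<le> f (p - \<gamma> *\<^sub>R d)"
  shows "2 * L \<le> ell f g p (p - \<gamma> *\<^sub>R d)"
proof -
  have "d \<noteq> 0" using descent by auto
  then have n: "0 < \<gamma>\<^sup>2 * (norm d)\<^sup>2" using \<gamma>_pos by simp
  have "\<gamma> * (L * (norm d)\<^sup>2) \<le> g p \<bullet> d"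
    using \<gamma>_le L \<open>d \<noteq> 0\<close> by (simp add: le_divide_eq)
  then have "L * (\<gamma>\<^sup>2 * (norm d)\<^sup>2) \<le> \<gamma> * (g p \<bullet> d)"
    using mult_left_mono[of _ _ \<gamma>] \<gamma>_pos by (fastforce simp: power2_eq_square mult_ac)
  also have "\<dots> \<le> \<bar>f (p - \<gamma> *\<^sub>R d) - f p - g p \<bullet> (p - \<gamma> *\<^sub>R d - p)\<bar>"
    using no_decrease by simp
  finally show ?thesis
    using \<open>d \<noteq> 0\<close> \<gamma>_pos n by (simp add: ell_def pos_le_divide_eq power_mult_distrib mult_ac)
qed

lemma inner_ge_on_convex_hull:
  fixes G :: "'a::real_inner"
  assumes "\<And>u. u \<in> A \<Longrightarrow> G \<bullet> v \<le> G \<bullet> u" "p \<in> convex hull A"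
  shows "G \<bullet> v \<le> G \<bullet> p"
proof -
  have "convex hull A \<subseteq> {y. G \<bullet> v \<le> G \<bullet> y}"
    using assms(1) convex_halfspace_ge[of "G \<bullet> v" G] by (intro hull_minimal) auto
  then show ?thesis using assms(2) by auto
qed

lemma dist_le_diameter_convex_hull:
  fixes A :: "'a::real_normed_vector set"
  assumes "bounded A" "v \<in> A" "p \<in> convex hull A"
  shows "dist v p \<le> diameter A"
proof -
  have "convex hull A \<subseteq> cball v (diameter A)"
    using assms(1,2) diameter_bounded_bound by (intro hull_minimal) (auto simp: subset_iff)
  then show ?thesis using assms(3) by auto
qed

text \<open>The weights \<open>\<alpha>\<^sub>t\<close> of the away-step subroutine: \<open>{a. 0 < w a}\<close> is the active set
  and p is the iterate.\<close>

definition convex_weights :: "'a::real_vector set \<Rightarrow> ('a \<Rightarrow> real) \<Rightarrow> 'a \<Rightarrow> bool" where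
  "convex_weights A w p \<longleftrightarrow> (\<forall>a. 0 \<le> w a) \<and> finite {a. 0 < w a} \<and> {a. 0 < w a} \<subseteq> A \<and>
     sum w {a. 0 < w a} = 1 \<and> p = (\<Sum>a\<in>{a. 0 < w a}. w a *\<^sub>R a)"

lemma sum_positive_support_eq:
  fixes w :: "'a \<Rightarrow> real"
  assumes "finite T" "{a. 0 < w a} \<subseteq> T" "\<And>a. 0 \<le> w a" "\<And>a. w a = 0 \<Longrightarrow> h a = 0"
  shows "sum h {a. 0 < w a} = sum h T"
  using assms by (intro sum.mono_neutral_left) (auto simp: less_le)

lemma convex_weights_in_convex_hull:
  assumes "convex_weights A w p"
  shows "p \<in> convex hull A"
proof -
  have "p \<in> convex hull {a. 0 < w a}"
    using assms by (auto simp: convex_weights_def convex_hull_finite)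
  moreover have "convex hull {a. 0 < w a} \<subseteq> convex hull A"
    using assms by (intro hull_mono) (simp add: convex_weights_def)
  ultimately show ?thesis by blast
qed

lemma convex_weights_support_card_ge_1:
  assumes "convex_weights A w p"
  shows "1 \<le> card {a. 0 < w a}"
proof -
  have "{a. 0 < w a} \<noteq> {}" "finite {a. 0 < w a}"
    using assms unfolding convex_weights_def by (metis sum.empty zero_neq_one)+
  then show ?thesis by (simp add: Suc_le_eq card_gt_0_iff)
qed

lemma convex_weights_lt_one_if_ne:
  assumes w: "convex_weights A w p" and "p \<noteq> s"
  shows "w s < 1"
proof -
  let ?S = "{a. 0 < w a}"
  have fin: "finite ?S" and nonneg: "\<And>a. 0 \<le> w a" and sum1: "sum w ?S = 1"
    using w by (auto simp: convex_weights_def)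
  have "w s \<le> 1"
  proof (cases "s \<in> ?S")
    case True
    then show ?thesis using member_le_sum[of s ?S w] fin nonneg sum1 by simp
  qed simp
  moreover have "w s \<noteq> 1"
  proof
    assume one: "w s = 1"
    then have "s \<in> ?S" by simp
    then have "sum w (?S - {s}) = 0"
      using sum.remove[OF fin \<open>s \<in> ?S\<close>, of w] sum1 one by simp
    then have "?S - {s} = {}"
      using fin nonneg by (subst (asm) sum_nonneg_eq_0_iff) auto
    then have "?S = {s}" using \<open>s \<in> ?S\<close> by blast
    then show False using w one \<open>p \<noteq> s\<close> by (simp add: convex_weights_def)
  qed
  ultimately show ?thesis by simp
qed

lemma convex_weights_toward:
  assumes w: "convex_weights A w p" and "v \<in> A" "0 \<le> \<gamma>" "\<gamma> \<le> 1"
  defines "w' \<equiv> \<lambda>a. (1 - \<gamma>) * w a + \<gamma> * (if a = v then 1 else 0)"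
  shows "convex_weights A w' (p - \<gamma> *\<^sub>R (p - v))"
    and "card {a. 0 < w' a} \<le> card {a. 0 < w a} + 1"
proof -
  let ?S = "{a. 0 < w a}" and ?T = "insert v {a. 0 < w a}"
  have nonneg: "\<And>a. 0 \<le> w a" and fin: "finite ?S" and sub: "?S \<subseteq> A"
    and sum1: "sum w ?S = 1" and p: "p = (\<Sum>a\<in>?S. w a *\<^sub>R a)"
    using w by (auto simp: convex_weights_def)
  have finT: "finite ?T" using fin by simp
  have nonneg': "\<And>a. 0 \<le> w' a" using nonneg \<open>0 \<le> \<gamma>\<close> \<open>\<gamma> \<le> 1\<close> by (simp add: w'_def)
  have sub': "{a. 0 < w' a} \<subseteq> ?T"
    using nonneg \<open>\<gamma> \<le> 1\<close> by (auto simp: w'_def less_le split: if_splits)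
  have "sum w ?S = sum w ?T" "(\<Sum>a\<in>?S. w a *\<^sub>R a) = (\<Sum>a\<in>?T. w a *\<^sub>R a)"
    using finT nonneg by (auto intro!: sum_positive_support_eq)
  then have ST: "sum w ?T = 1" "p = (\<Sum>a\<in>?T. w a *\<^sub>R a)"
    using sum1 p by simp_all
  have "sum w' {a. 0 < w' a} = sum w' ?T"
    using nonneg' by (intro sum_positive_support_eq[OF finT sub']) auto
  also have "\<dots> = 1"
    using ST finT by (simp add: w'_def sum.distrib sum_distrib_left[symmetric])
  finally have sum1': "sum w' {a. 0 < w' a} = 1" .
  have "(\<Sum>a\<in>{a. 0 < w' a}. w' a *\<^sub>R a) = (\<Sum>a\<in>?T. w' a *\<^sub>R a)"
    using nonneg' by (intro sum_positive_support_eq[OF finT sub']) auto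
  also have "\<dots> = (\<Sum>a\<in>?T. (1 - \<gamma>) *\<^sub>R (w a *\<^sub>R a) + \<gamma> *\<^sub>R (if a = v then a else 0))"
    by (intro sum.cong) (auto simp: w'_def scaleR_add_left)
  also have "\<dots> = (1 - \<gamma>) *\<^sub>R (\<Sum>a\<in>?T. w a *\<^sub>R a) + \<gamma> *\<^sub>R (\<Sum>a\<in>?T. if a = v then a else 0)"
    by (simp only: sum.distrib scaleR_sum_right)
  also have "\<dots> = p - \<gamma> *\<^sub>R (p - v)"
    using ST finT by (simp add: algebra_simps)
  finally show "convex_weights A w' (p - \<gamma> *\<^sub>R (p - v))"
    using nonneg' sum1' sub' sub \<open>v \<in> A\<close> finite_subset[OF sub' finT]
    unfolding convex_weights_def by auto
  have "card {a. 0 < w' a} \<le> card ?T" using card_mono[OF finT sub'] .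
  also have "\<dots> \<le> card ?S + 1" using fin by (simp add: card_insert_if)
  finally show "card {a. 0 < w' a} \<le> card ?S + 1" .
qed

lemma convex_weights_away:
  assumes w: "convex_weights A w p" and "0 < w s" "0 \<le> \<gamma>" "\<gamma> * (1 - w s) \<le> w s"
  defines "w' \<equiv> \<lambda>a. (1 + \<gamma>) * w a - \<gamma> * (if a = s then 1 else 0)"
  shows "convex_weights A w' (p - \<gamma> *\<^sub>R (s - p))"
    and "card {a. 0 < w' a} \<le> card {a. 0 < w a}"
    and "\<gamma> * (1 - w s) = w s \<Longrightarrow> card {a. 0 < w' a} < card {a. 0 < w a}"
proof -
  let ?S = "{a. 0 < w a}"
  have nonneg: "\<And>a. 0 \<le> w a" and fin: "finite ?S" and sub: "?S \<subseteq> A"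
    and sum1: "sum w ?S = 1" and p: "p = (\<Sum>a\<in>?S. w a *\<^sub>R a)"
    using w by (auto simp: convex_weights_def)
  have "s \<in> ?S" using \<open>0 < w s\<close> by simp
  have nonneg': "\<And>a. 0 \<le> w' a"
    using nonneg \<open>0 \<le> \<gamma>\<close> \<open>\<gamma> * (1 - w s) \<le> w s\<close> by (auto simp: w'_def algebra_simps)
  have sub': "{a. 0 < w' a} \<subseteq> ?S"
    using nonneg \<open>0 \<le> \<gamma>\<close> \<open>0 < w s\<close> by (auto simp: w'_def less_le split: if_splits)
  have "sum w' {a. 0 < w' a} = sum w' ?S"
    using nonneg' by (intro sum_positive_support_eq[OF fin sub']) auto
  also have "\<dots> = 1"
    using sum1 fin \<open>s \<in> ?S\<close> by (simp add: w'_def sum_subtractf sum_distrib_left[symmetric])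
  finally have sum1': "sum w' {a. 0 < w' a} = 1" .
  have "(\<Sum>a\<in>{a. 0 < w' a}. w' a *\<^sub>R a) = (\<Sum>a\<in>?S. w' a *\<^sub>R a)"
    using nonneg' by (intro sum_positive_support_eq[OF fin sub']) auto
  also have "\<dots> = (\<Sum>a\<in>?S. (1 + \<gamma>) *\<^sub>R (w a *\<^sub>R a) - \<gamma> *\<^sub>R (if a = s then a else 0))"
    by (intro sum.cong) (auto simp: w'_def scaleR_diff_left)
  also have "\<dots> = (1 + \<gamma>) *\<^sub>R (\<Sum>a\<in>?S. w a *\<^sub>R a) - \<gamma> *\<^sub>R (\<Sum>a\<in>?S. if a = s then a else 0)"
    by (simp only: sum_subtractf scaleR_sum_right)
  also have "\<dots> = p - \<gamma> *\<^sub>R (s - p)"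
    using p fin \<open>s \<in> ?S\<close> by (simp add: algebra_simps)
  finally show "convex_weights A w' (p - \<gamma> *\<^sub>R (s - p))"
    using nonneg' sum1' sub' sub finite_subset[OF sub' fin]
    unfolding convex_weights_def by auto
  show "card {a. 0 < w' a} \<le> card ?S" using card_mono[OF fin sub'] .
  assume "\<gamma> * (1 - w s) = w s"
  then have "w' s = 0" by (simp add: w'_def algebra_simps)
  then have "{a. 0 < w' a} \<subset> ?S" using sub' \<open>s \<in> ?S\<close> by force
  then show "card {a. 0 < w' a} < card ?S" using fin by (rule psubset_card_mono[rotated])
qed

lemma card_Collect_less_Suc:
  "card {k. k < Suc t \<and> P k} = card {k. k < t \<and> P k} + (if P t then 1 else 0)"
proof -
  have "{k. k < Suc t \<and> P k} = (if P t then insert t {k. k < t \<and> P k} else {k. k < t \<and> P k})"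
    by (auto simp: less_Suc_eq)
  then show ?thesis by simp
qed

lemma card_decreasing_steps_le:
  fixes c :: "nat \<Rightarrow> nat"
  assumes "\<And>k. c (Suc k) \<le> c k + 1" "\<And>k. P k \<Longrightarrow> c (Suc k) < c k"
  shows "c t + 2 * card {k. k < t \<and> P k} \<le> c 0 + t"
proof (induction t)
  case (Suc t)
  then show ?case using assms[of t] by (cases "P t") (auto simp: card_Collect_less_Suc)
qed simp

lemma limit_le_partial_prod:
  fixes r :: "nat \<Rightarrow> real"
  assumes "\<And>k. 0 \<le> r k" "\<And>k. r k \<le> 1" "(\<lambda>n. \<Prod>k<n. r k) \<longlonglongrightarrow> p"
  shows "p \<le> (\<Prod>k<n. r k)"
proof (rule decseq_ge[OF decseq_SucI assms(3)])
  fix n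
  show "(\<Prod>k<Suc n. r k) \<le> (\<Prod>k<n. r k)"
    using assms(1,2) by (simp add: prod_nonneg mult_left_le)
qed

lemma damped_growth_lower_bound:
  fixes L r :: "nat \<Rightarrow> real"
  assumes "0 \<le> L 0" "0 \<le> \<eta>" "\<And>k. 0 \<le> r k" "\<And>k. r k \<le> 1" "\<And>k. r k * L k \<le> L (Suc k)"
  shows "L 0 * \<eta> ^ card {k. k < t \<and> \<eta> * L k < L (Suc k)} * (\<Prod>k<t. r k) \<le> L t"
proof (induction t)
  case (Suc t)
  let ?c = "L 0 * \<eta> ^ card {k. k < t \<and> \<eta> * L k < L (Suc k)} * (\<Prod>k<t. r k)"
  have "0 \<le> ?c" using assms(1-3) by (simp add: prod_nonneg)
  show ?case
  proof (cases "\<eta> * L t < L (Suc t)")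
    case True
    have "?c * \<eta> * r t \<le> ?c * \<eta>"
      using \<open>0 \<le> ?c\<close> assms(2,4) by (simp add: mult_left_le)
    also have "\<dots> \<le> \<eta> * L t" using Suc.IH assms(2) by (simp add: mult.commute mult_left_mono)
    finally show ?thesis using True by (simp add: card_Collect_less_Suc mult_ac)
  next
    case False
    have "?c * r t \<le> L t * r t" using Suc.IH assms(3) by (rule mult_right_mono)
    then show ?thesis using False assms(5)[of t] by (simp add: card_Collect_less_Suc mult_ac)
  qed
qed simp

lemma card_jumps_le_floor_log:
  fixes L r :: "nat \<Rightarrow> real"
  assumes "0 < L 0" "1 < \<eta>" "\<And>k. 0 \<le> r k" "\<And>k. r k \<le> 1" "\<And>k. r k * L k \<le> L (Suc k)"
    and "L t \<le> M" "0 < c" "c \<le> (\<Prod>k<t. r k)"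
  shows "int (card {k. k < t \<and> \<eta> * L k < L (Suc k)}) \<le> \<lfloor>log \<eta> (M / (c * L 0))\<rfloor>"
proof -
  let ?N = "card {k. k < t \<and> \<eta> * L k < L (Suc k)}"
  have "L 0 * \<eta> ^ ?N * c \<le> L 0 * \<eta> ^ ?N * (\<Prod>k<t. r k)"
    using assms(1,2,8) by simp
  also have "\<dots> \<le> M"
    using damped_growth_lower_bound[of L \<eta> r t] assms(1-6) by simp
  finally have "\<eta> ^ ?N \<le> M / (c * L 0)"
    using assms(1,7) by (simp add: le_divide_eq mult_ac)
  then have "real ?N \<le> log \<eta> (M / (c * L 0))"
    using assms(2) by (rule le_log_of_power)
  then show ?thesis by (simp add: le_floor_iff)
qed

lemma infinite_of_card_lower_bound:
  assumes "\<And>t. (real t + 1) / 2 - c \<le> real (card {k \<in> {0..t}. P k})"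
  shows "infinite {k. P k}"
proof
  assume fin: "finite {k. P k}"
  define t where "t = 2 * (card {k. P k} + nat \<lceil>c\<rceil>)"
  have "real (card {k \<in> {0..t}. P k}) \<le> real (card {k. P k})"
    using fin by (simp add: card_mono subset_iff)
  moreover have "c \<le> real (nat \<lceil>c\<rceil>)" by (rule real_nat_ceiling_ge)
  moreover have "real t = 2 * (real (card {k. P k}) + real (nat \<lceil>c\<rceil>))" by (simp add: t_def)
  ultimately show False using assms[of t] by argo
qed

locale acfw_afw =
  fixes A :: "'a::real_inner set" and f :: "'a \<Rightarrow> real" and g :: "'a \<Rightarrow> 'a"
    and r :: "nat \<Rightarrow> real" and xm1 :: 'a
    and x v s d :: "nat \<Rightarrow> 'a" and Ls gmax gam :: "nat \<Rightarrow> real"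
    and alpha :: "nat \<Rightarrow> 'a \<Rightarrow> real"
  assumes run: "acfw_afw_run A f g r xm1 x Ls v s d gmax gam alpha"
    and r_pos: "\<And>t. 0 < r t" and r_le_1: "\<And>t. r t \<le> 1"
    and Ls0_pos: "0 < Ls 0"
begin

abbreviation "fw_step t \<equiv> g (x t) \<bullet> (s t - x t) \<le> g (x t) \<bullet> (x t - v t)"
abbreviation "decrease t \<equiv> f (x t - gam t *\<^sub>R d t) < f (x t)"
abbreviation "drop_step t \<equiv> gmax t < 1 \<and> gmax t \<le> gam t"
  \<comment> \<open>the complement of G, since \<open>gam t \<le> gmax t\<close>\<close>

lemma
  shows x0_mem: "x 0 \<in> A"
    and Ls_0: "Ls 0 = ell f g xm1 (x 0)"
    and alpha_0: "alpha 0 = (\<lambda>a. if a = x 0 then 1 else 0)"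
  using run by (simp_all add: acfw_afw_run_def)

lemma
  shows v_mem: "v t \<in> A"
    and v_min: "u \<in> A \<Longrightarrow> g (x t) \<bullet> v t \<le> g (x t) \<bullet> u"
    and s_pos: "0 < alpha t (s t)"
    and fw_step_dir: "fw_step t \<Longrightarrow> d t = x t - v t \<and> gmax t = 1"
    and away_step_dir: "\<not> fw_step t \<Longrightarrow>
      d t = s t - x t \<and> gmax t = alpha t (s t) / (1 - alpha t (s t))"
    and gam_eq: "gam t = min (g (x t) \<bullet> d t / (Ls t * (norm (d t))\<^sup>2)) (gmax t)"
    and Ls_Suc: "Ls (Suc t) = max (ell f g (x t) (x t - gam t *\<^sub>R d t)) (r t * Ls t)"
    and fw_step_accept: "decrease t \<Longrightarrow> fw_step t \<Longrightarrow> x (Suc t) = x t - gam t *\<^sub>R d t \<and>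
      alpha (Suc t) = (\<lambda>a. (1 - gam t) * alpha t a + gam t * (if a = v t then 1 else 0))"
    and away_step_accept: "decrease t \<Longrightarrow> \<not> fw_step t \<Longrightarrow> x (Suc t) = x t - gam t *\<^sub>R d t \<and>
      alpha (Suc t) = (\<lambda>a. (1 + gam t) * alpha t a - gam t * (if a = s t then 1 else 0))"
    and reject: "\<not> decrease t \<Longrightarrow> x (Suc t) = x t \<and> alpha (Suc t) = alpha t"
  using run unfolding acfw_afw_run_def by (auto split: if_splits)

lemma Ls_pos: "0 < Ls t"
proof (induction t)
  case (Suc t)
  then have "0 < r t * Ls t" using r_pos[of t] by simp
  then show ?case using Ls_Suc[of t] by linarith
qed (rule Ls0_pos)

lemma Ls_le_lipschitz_constant:
  assumes grad: "\<And>y. (f has_derivative (\<lambda>h. g y \<bullet> h)) (at y)"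
    and lip: "\<And>y z. norm (g y - g z) \<le> Lf * norm (y - z)" and "0 \<le> Lf"
  shows "Ls t \<le> Lf"
proof (induction t)
  case 0
  show ?case using ell_le_lipschitz_constant[OF grad lip \<open>0 \<le> Lf\<close>] by (simp add: Ls_0)
next
  case (Suc t)
  have "r t * Ls t \<le> Lf"
    using Suc r_le_1[of t] Ls_pos[of t] by (meson mult_left_le_one_le less_imp_le order_trans r_pos)
  then show ?case using ell_le_lipschitz_constant[OF grad lip \<open>0 \<le> Lf\<close>] by (simp add: Ls_Suc)
qed

context
  fixes t assumes weights: "convex_weights A (alpha t) (x t)"
begin

lemma fw_gap_nonneg: "0 \<le> g (x t) \<bullet> (x t - v t)"
  using inner_ge_on_convex_hull[OF v_min convex_weights_in_convex_hull[OF weights]]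
  by (simp add: inner_diff_right)

lemma fw_gap_le_inner_direction: "g (x t) \<bullet> (x t - v t) \<le> g (x t) \<bullet> d t"
  using fw_step_dir[of t] away_step_dir[of t] by (cases "fw_step t") auto

lemma away_step_weight_lt_1:
  assumes "\<not> fw_step t" shows "alpha t (s t) < 1"
proof (rule convex_weights_lt_one_if_ne[OF weights])
  show "x t \<noteq> s t" using assms fw_gap_nonneg by auto
qed

lemma away_step_size_bound:
  assumes "\<not> fw_step t" "\<gamma> \<le> gmax t"
  shows "\<gamma> * (1 - alpha t (s t)) \<le> alpha t (s t)"
  using assms away_step_dir[of t] away_step_weight_lt_1 by (simp add: le_divide_eq)

lemma gmax_pos: "0 < gmax t"
  using fw_step_dir[of t] away_step_dir[of t] away_step_weight_lt_1 s_pos[of t]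
  by (cases "fw_step t") auto

lemma gam_nonneg: "0 \<le> gam t"
proof -
  have "0 \<le> g (x t) \<bullet> d t / (Ls t * (norm (d t))\<^sup>2)"
    using fw_gap_nonneg fw_gap_le_inner_direction Ls_pos[of t] by simp
  then show ?thesis using gam_eq[of t] gmax_pos by simp
qed

lemma
  shows convex_weights_Suc: "convex_weights A (alpha (Suc t)) (x (Suc t))"
    and card_support_Suc_le: "card {a. 0 < alpha (Suc t) a} \<le> card {a. 0 < alpha t a} + 1"
proof -
  consider "decrease t" "fw_step t" | "decrease t" "\<not> fw_step t" | "\<not> decrease t" by blast
  then have "convex_weights A (alpha (Suc t)) (x (Suc t)) \<and>
      card {a. 0 < alpha (Suc t) a} \<le> card {a. 0 < alpha t a} + 1"
  proof cases
    case 1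
    have "gam t \<le> 1" using gam_eq[of t] fw_step_dir[OF \<open>fw_step t\<close>] by simp
    then show ?thesis
      using convex_weights_toward[OF weights v_mem gam_nonneg] fw_step_accept[OF 1]
        fw_step_dir[OF \<open>fw_step t\<close>]
      by simp
  next
    case 2
    have "gam t * (1 - alpha t (s t)) \<le> alpha t (s t)"
      using away_step_size_bound[OF \<open>\<not> fw_step t\<close>] gam_eq[of t] by simp
    then show ?thesis
      using convex_weights_away[OF weights s_pos gam_nonneg] away_step_accept[OF 2]
        away_step_dir[OF \<open>\<not> fw_step t\<close>]
      by fastforce
  next
    case 3
    then show ?thesis using weights reject by simp
  qed
  then show "convex_weights A (alpha (Suc t)) (x (Suc t))"
    and "card {a. 0 < alpha (Suc t) a} \<le> card {a. 0 < alpha t a} + 1" by simp_all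
qed

lemma drop_step_shrinks_support:
  assumes drop: "drop_step t" and "Ls (Suc t) \<le> \<eta> * Ls t" "\<eta> < 2"
  shows "card {a. 0 < alpha (Suc t) a} < card {a. 0 < alpha t a}"
proof -
  have away: "\<not> fw_step t" using drop fw_step_dir[of t] by auto
  have gam: "gam t = gmax t" using drop gam_eq[of t] by simp
  have "decrease t"
  proof (rule ccontr)
    assume "\<not> decrease t"
    have "0 < g (x t) \<bullet> d t" using away fw_gap_nonneg away_step_dir[OF away] by simp
    moreover have "gam t \<le> g (x t) \<bullet> d t / (Ls t * (norm (d t))\<^sup>2)" using gam_eq[of t] by simp
    moreover have "0 < gam t" using gam gmax_pos by simp
    ultimately have "2 * Ls t \<le> ell f g (x t) (x t - gam t *\<^sub>R d t)"
      using \<open>\<not> decrease t\<close> by (intro ell_ge_twice_of_no_decrease[OF Ls_pos]) auto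
    then have "2 * Ls t \<le> \<eta> * Ls t" using Ls_Suc[of t] assms(2) by simp
    then show False using \<open>\<eta> < 2\<close> Ls_pos[of t] by simp
  qed
  have "gam t * (1 - alpha t (s t)) = alpha t (s t)"
    using gam away_step_dir[OF away] away_step_weight_lt_1[OF away] by simp
  then show ?thesis
    using convex_weights_away(3)[OF weights s_pos gam_nonneg away_step_size_bound[OF away]]
      away_step_accept[OF \<open>decrease t\<close> away] away_step_dir[OF away] gam
    by simp
qed

end

lemma convex_weights_alpha: "convex_weights A (alpha t) (x t)"
proof (induction t)
  case 0
  have "{a. 0 < alpha 0 a} = {x 0}" by (simp add: alpha_0)
  then show ?case using x0_mem by (simp add: convex_weights_def alpha_0)
next
  case (Suc t)
  then show ?case by (rule convex_weights_Suc)
qed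

lemma card_drop_steps_le:
  assumes "\<eta> < 2"
  shows "2 * card {k. k < Suc t \<and> drop_step k \<and> Ls (Suc k) \<le> \<eta> * Ls k} \<le> Suc t"
proof -
  let ?c = "\<lambda>t. card {a. 0 < alpha t a}"
  have "?c (Suc t) + 2 * card {k. k < Suc t \<and> drop_step k \<and> Ls (Suc k) \<le> \<eta> * Ls k} \<le> ?c 0 + Suc t"
    using card_support_Suc_le[OF convex_weights_alpha] drop_step_shrinks_support[OF convex_weights_alpha _ _ assms]
    by (intro card_decreasing_steps_le) auto
  moreover have "?c 0 = 1" by (simp add: alpha_0)
  moreover have "1 \<le> ?c (Suc t)" by (rule convex_weights_support_card_ge_1[OF convex_weights_alpha])
  ultimately show ?thesis by simp
qed

lemma s_mem: "s t \<in> A"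
  using convex_weights_alpha[of t] s_pos[of t] by (auto simp: convex_weights_def)

lemma norm_direction_le_diameter:
  assumes "bounded A"
  shows "norm (d t) \<le> diameter A"
proof (cases "fw_step t")
  case True
  then show ?thesis
    using dist_le_diameter_convex_hull[OF assms v_mem convex_weights_in_convex_hull[OF convex_weights_alpha]]
      fw_step_dir[OF True] by (simp add: dist_norm norm_minus_commute)
next
  case False
  then show ?thesis
    using dist_le_diameter_convex_hull[OF assms s_mem convex_weights_in_convex_hull[OF convex_weights_alpha]]
      away_step_dir[OF False] by (simp add: dist_norm)
qed

lemma step_in_convex_hull:
  assumes "0 \<le> \<gamma>" "\<gamma> \<le> gmax t"
  shows "x t - \<gamma> *\<^sub>R d t \<in> convex hull A"
proof (cases "fw_step t")
  case True
  then show ?thesis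
    using convex_weights_in_convex_hull[OF convex_weights_toward(1)[OF convex_weights_alpha[of t] v_mem assms(1)]]
      fw_step_dir[OF True] assms(2)
    by simp
next
  case False
  then show ?thesis
    using convex_weights_in_convex_hull[OF convex_weights_away(1)[OF convex_weights_alpha s_pos assms(1)
        away_step_size_bound[OF convex_weights_alpha False assms(2)]]]
      away_step_dir[OF False]
    by simp
qed

lemma card_good_steps_ge:
  assumes grad: "\<And>y. (f has_derivative (\<lambda>h. g y \<bullet> h)) (at y)"
    and lip: "\<And>y z. norm (g y - g z) \<le> Lf * norm (y - z)" and "0 < Lf"
    and "1 < \<eta>" "\<eta> < 2" and prod: "(\<lambda>n. \<Prod>k<n. r k) \<longlonglongrightarrow> rp" "0 < rp"
  shows "(real t + 1) / 2 - of_int \<lfloor>log \<eta> (Lf / (rp * Ls 0))\<rfloor>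
    \<le> real (card {k \<in> {0..t}. (1 \<le> gmax k \<or> gam k < gmax k) \<and> Ls (Suc k) \<le> \<eta> * Ls k})"
proof -
  let ?G = "{k \<in> {0..t}. (1 \<le> gmax k \<or> gam k < gmax k) \<and> Ls (Suc k) \<le> \<eta> * Ls k}"
  let ?J = "{k. k < Suc t \<and> \<eta> * Ls k < Ls (Suc k)}"
  let ?D = "{k. k < Suc t \<and> drop_step k \<and> Ls (Suc k) \<le> \<eta> * Ls k}"
  have "{0..t} \<subseteq> ?G \<union> ?J \<union> ?D" by auto
  then have "card {0..t} \<le> card (?G \<union> ?J \<union> ?D)" by (intro card_mono) auto
  also have "\<dots> \<le> card ?G + card ?J + card ?D" by (meson card_Un_le add_le_mono order_trans le_refl)
  finally have "real (Suc t) \<le> real (card ?G + card ?J + card ?D)" by simp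
  moreover have "real (2 * card ?D) \<le> real (Suc t)"
    using card_drop_steps_le[OF \<open>\<eta> < 2\<close>] by (simp only: of_nat_le_iff)
  moreover have "int (card ?J) \<le> \<lfloor>log \<eta> (Lf / (rp * Ls 0))\<rfloor>"
  proof (rule card_jumps_le_floor_log)
    show "rp \<le> (\<Prod>k<Suc t. r k)"
      using limit_le_partial_prod[OF less_imp_le[OF r_pos] r_le_1 prod(1)] .
    show "Ls (Suc t) \<le> Lf" using Ls_le_lipschitz_constant[OF grad lip] \<open>0 < Lf\<close> by simp
  qed (use Ls0_pos \<open>1 < \<eta>\<close> less_imp_le[OF r_pos] r_le_1 Ls_Suc \<open>0 < rp\<close> in auto)
  then have "real (card ?J) \<le> of_int \<lfloor>log \<eta> (Lf / (rp * Ls 0))\<rfloor>"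
    by (metis of_int_le_iff of_int_of_nat_eq)
  ultimately show ?thesis by simp argo
qed

lemma inner_direction_ge_primal_gap:
  assumes grad: "\<And>y. (f has_derivative (\<lambda>h. g y \<bullet> h)) (at y)"
    and "convex_on UNIV f" "y \<in> convex hull A"
  shows "f (x t) - f y \<le> g (x t) \<bullet> d t"
proof -
  have "f (x t) - f y \<le> g (x t) \<bullet> (x t - y)"
    using convex_on_gradient_inequality[OF grad \<open>convex_on UNIV f\<close>, of "x t" y]
    by (simp add: inner_diff_right)
  also have "\<dots> \<le> g (x t) \<bullet> (x t - v t)"
    using inner_ge_on_convex_hull[OF v_min \<open>y \<in> convex hull A\<close>] by (simp add: inner_diff_right)
  also have "\<dots> \<le> g (x t) \<bullet> d t"
    by (rule fw_gap_le_inner_direction[OF convex_weights_alpha])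
  finally show ?thesis .
qed

end

theorem lemma8:
  fixes A :: "'a::euclidean_space set" and f :: "'a \<Rightarrow> real" and g :: "'a \<Rightarrow> 'a"
    and Lf \<eta> rp :: real and r :: "nat \<Rightarrow> real" and xm1 :: 'a
    and x v s d :: "nat \<Rightarrow> 'a" and Ls gmax gam :: "nat \<Rightarrow> real"
    and alpha :: "nat \<Rightarrow> 'a \<Rightarrow> real"
  assumes "compact A"
    and grad: "\<And>y. (f has_derivative (\<lambda>h. g y \<bullet> h)) (at y)"
    and Lf_pos: "0 < Lf"
    and lip: "\<And>y z. norm (g y - g z) \<le> Lf * norm (y - z)"
    and "1 < \<eta>" "\<eta> < 2"
    and D: "\<And>t. 0 < r t \<and> r t \<le> 1"
    and Dprod: "(\<lambda>n. \<Prod>t<n. r t) \<longlonglongrightarrow> rp" "0 < rp" "rp \<le> 1"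
    and run: "acfw_afw_run A f g r xm1 x Ls v s d gmax gam alpha"
    and L0: "0 < Ls 0"
  shows "(\<forall>t. norm (d t) \<le> diameter A \<and>
              (\<forall>\<gamma>. 0 \<le> \<gamma> \<and> \<gamma> \<le> gmax t \<longrightarrow> x t - \<gamma> *\<^sub>R d t \<in> convex hull A))
       \<and> infinite {t. gmax t \<ge> 1 \<or> gam t < gmax t}
       \<and> (\<forall>t. real (card {k \<in> {0..t}. (gmax k \<ge> 1 \<or> gam k < gmax k) \<and> Ls (Suc k) \<le> \<eta> * Ls k})
              \<ge> (real t + 1) / 2 - of_int \<lfloor>log \<eta> (Lf / (rp * Ls 0))\<rfloor>)
       \<and> (convex_on UNIV f \<longrightarrow>
            (\<forall>xs. xs \<in> convex hull A \<and> (\<forall>y\<in>convex hull A. f xs \<le> f y) \<longrightarrow>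
               (\<forall>t. g (x t) \<bullet> d t \<ge> (f (x t) - f xs) / 1)))"
proof -
  interpret acfw_afw A f g r xm1 x v s d Ls gmax gam alpha
    using run D L0 by unfold_locales auto
  note count = card_good_steps_ge[OF grad lip Lf_pos \<open>1 < \<eta>\<close> \<open>\<eta> < 2\<close> Dprod(1,2)]
  have "infinite {k. (1 \<le> gmax k \<or> gam k < gmax k) \<and> Ls (Suc k) \<le> \<eta> * Ls k}"
    using count by (rule infinite_of_card_lower_bound)
  then have "infinite {t. 1 \<le> gmax t \<or> gam t < gmax t}"
    by (rule infinite_super[rotated]) auto
  then show ?thesis
    using norm_direction_le_diameter[OF compact_imp_bounded[OF \<open>compact A\<close>]] step_in_convex_hull
      count inner_direction_ge_primal_gap[OF grad]
    by auto
qed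

end
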